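(* Let $\mathcal X$ be a finite-dimensional operator system and $\mathcal X_0\subsetneq\mathcal X$ a proper operator subsystem. Then $\mathrm{Ind}_{\mathrm{CP}}(\mathcal X:\mathcal X_0)>1$.
   Context: For an operator system $\mathcal X$ with unit $1$, $\mathrm{CP}(\mathcal X)$ denotes the completely positive maps $\mathcal X\to\mathcal X$ and $\mathrm{CP}_1(\mathcal X)$ the set of $\varphi\in\mathrm{CP}(\mathcal X)$ with $\varphi(\mathbb C1)\subset\mathbb C1$. For an operator subsystem $\mathcal X_0\subset\mathcal X$, $\mathrm{Ind}_{\mathrm{CP}}(\mathcal X:\mathcal X_0)=\inf\{\|\varphi(1)\|:\varphi\in\mathrm{CP}_1(\mathcal X),\ \varphi(\mathcal X)\subset\mathcal X_0,\ \varphi-\mathrm{id}_{\mathcal X}\in\mathrm{CP}(\mathcal X)\}$ ($\infty$ if empty). *)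

theory Defs
  imports "HOL-Analysis.Analysis"
begin

text \<open>A finite-dimensional complex vector space is modelled (up to linear isomorphism)
as complex^'d with 'd a finite type. Matrices over it are functions nat => nat => _ ,
an n x n matrix being one that vanishes outside indices < n.
An abstract operator system (Choi--Effros) is given by an involution, a unit e and
matrix cones C n.\<close>

definition mat_n :: "nat \<Rightarrow> (nat \<Rightarrow> nat \<Rightarrow> 'b::zero) set" where
  "mat_n n = {M. \<forall>i j. (n \<le> i \<or> n \<le> j) \<longrightarrow> M i j = 0}"

definition madj :: "('v \<Rightarrow> 'v) \<Rightarrow> nat \<Rightarrow> (nat \<Rightarrow> nat \<Rightarrow> 'v) \<Rightarrow> (nat \<Rightarrow> nat \<Rightarrow> 'v::zero)" where
  "madj star n M = (\<lambda>i j. if i < n \<and> j < n then star (M j i) else 0)"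

text \<open>A^* M A for a scalar n x m matrix A and M in M_n(X).\<close>
definition mcongr :: "nat \<Rightarrow> nat \<Rightarrow> (nat \<Rightarrow> nat \<Rightarrow> complex) \<Rightarrow> (nat \<Rightarrow> nat \<Rightarrow> complex^'d)
    \<Rightarrow> (nat \<Rightarrow> nat \<Rightarrow> complex^'d)" where
  "mcongr n m A M = (\<lambda>k l. if k < m \<and> l < m
      then (\<Sum>i<n. \<Sum>j<n. (cnj (A i k) * A j l) *s M i j) else 0)"

definition mdiag :: "nat \<Rightarrow> 'v \<Rightarrow> (nat \<Rightarrow> nat \<Rightarrow> 'v::zero)" where
  "mdiag n x = (\<lambda>i j. if i = j \<and> i < n then x else 0)"

definition operator_system ::
  "(complex^'d \<Rightarrow> complex^'d) \<Rightarrow> complex^'d \<Rightarrow> (nat \<Rightarrow> (nat \<Rightarrow> nat \<Rightarrow> complex^'d) set) \<Rightarrow> bool" where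
  "operator_system star e C \<longleftrightarrow>
     (\<forall>x y. star (x + y) = star x + star y) \<and>
     (\<forall>c x. star (c *s x) = cnj c *s star x) \<and>
     (\<forall>x. star (star x) = x) \<and>
     star e = e \<and>
     (\<forall>n. C n \<subseteq> {M \<in> mat_n n. madj star n M = M}) \<and>
     (\<forall>n M N. M \<in> C n \<longrightarrow> N \<in> C n \<longrightarrow> (\<lambda>i j. M i j + N i j) \<in> C n) \<and>
     (\<forall>n M (r::real). M \<in> C n \<longrightarrow> r \<ge> 0 \<longrightarrow> (\<lambda>i j. complex_of_real r *s M i j) \<in> C n) \<and>
     (\<forall>n m A M. M \<in> C n \<longrightarrow> mcongr n m A M \<in> C m) \<and>
     (\<forall>n M. M \<in> C n \<longrightarrow> (\<lambda>i j. - M i j) \<in> C n \<longrightarrow> M = (\<lambda>i j. 0)) \<and>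
     (\<forall>n H. H \<in> mat_n n \<longrightarrow> madj star n H = H \<longrightarrow>
        (\<exists>r>0. (\<lambda>i j. complex_of_real r *s mdiag n e i j + H i j) \<in> C n)) \<and>
     (\<forall>n H. H \<in> mat_n n \<longrightarrow> madj star n H = H \<longrightarrow>
        (\<forall>r>0. (\<lambda>i j. complex_of_real r *s mdiag n e i j + H i j) \<in> C n) \<longrightarrow> H \<in> C n)"

definition operator_subsystem ::
  "(complex^'d \<Rightarrow> complex^'d) \<Rightarrow> complex^'d \<Rightarrow> (complex^'d) set \<Rightarrow> bool" where
  "operator_subsystem star e X0 \<longleftrightarrow>
     0 \<in> X0 \<and> (\<forall>x\<in>X0. \<forall>y\<in>X0. x + y \<in> X0) \<and> (\<forall>c. \<forall>x\<in>X0. c *s x \<in> X0) \<and>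
     e \<in> X0 \<and> (\<forall>x\<in>X0. star x \<in> X0)"

definition clinear_map :: "(complex^'d \<Rightarrow> complex^'d) \<Rightarrow> bool" where
  "clinear_map \<phi> \<longleftrightarrow> (\<forall>x y. \<phi> (x + y) = \<phi> x + \<phi> y) \<and> (\<forall>c x. \<phi> (c *s x) = c *s \<phi> x)"

definition CP_map :: "(nat \<Rightarrow> (nat \<Rightarrow> nat \<Rightarrow> complex^'d) set) \<Rightarrow> (complex^'d \<Rightarrow> complex^'d) \<Rightarrow> bool" where
  "CP_map C \<phi> \<longleftrightarrow> clinear_map \<phi> \<and> (\<forall>n M. M \<in> C n \<longrightarrow> (\<lambda>i j. \<phi> (M i j)) \<in> C n)"

definition os_norm ::
  "(complex^'d \<Rightarrow> complex^'d) \<Rightarrow> complex^'d \<Rightarrow> (nat \<Rightarrow> (nat \<Rightarrow> nat \<Rightarrow> complex^'d) set) \<Rightarrow> complex^'d \<Rightarrow> real" where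
  "os_norm star e C x = Inf {r::real. r \<ge> 0 \<and>
      (\<lambda>i j. if i = 0 \<and> j = 0 then complex_of_real r *s e
             else if i = 0 \<and> j = 1 then x
             else if i = 1 \<and> j = 0 then star x
             else if i = 1 \<and> j = 1 then complex_of_real r *s e else 0) \<in> C 2}"

definition Ind_CP ::
  "(complex^'d \<Rightarrow> complex^'d) \<Rightarrow> complex^'d \<Rightarrow> (nat \<Rightarrow> (nat \<Rightarrow> nat \<Rightarrow> complex^'d) set) \<Rightarrow> (complex^'d) set \<Rightarrow> ereal" where
  "Ind_CP star e C X0 = Inf (ereal ` {os_norm star e C (\<phi> e) | \<phi>.
      CP_map C \<phi> \<and> (\<forall>c. \<exists>c'. \<phi> (c *s e) = c' *s e) \<and> range \<phi> \<subseteq> X0 \<and> CP_map C (\<lambda>x. \<phi> x - x)})"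

end

theory Submission
  imports Defs
begin

text \<open>If \<open>\<phi>\<close> is admissible, then \<open>\<psi> = \<phi> - id\<close> is completely positive with \<open>\<psi>(1) = \<mu> 1\<close>
  for some \<open>\<mu> \<ge> 0\<close>, so \<open>\<parallel>\<phi>(1)\<parallel> = 1 + \<mu>\<close>. Choose a self-adjoint \<open>h \<notin> X\<^sub>0\<close> with \<open>-r 1 \<le> h \<le> r 1\<close>;
  positivity of \<open>\<psi>\<close> gives \<open>-r\<mu> 1 \<le> \<psi>(h) \<le> r\<mu> 1\<close>. In finite dimensions the order interval
  \<open>[-1, 1]\<close> is norm-bounded (the positive cone is closed and contains no line), so
  \<open>\<parallel>\<psi>(h)\<parallel> \<le> c r \<mu>\<close>. But \<open>\<psi>(h) = \<phi>(h) - h\<close> with \<open>\<phi>(h) \<in> X\<^sub>0\<close>, so \<open>\<parallel>\<psi>(h)\<parallel>\<close> is at least the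
  distance from \<open>h\<close> to the closed subspace \<open>X\<^sub>0\<close>, which is positive. This bounds \<open>\<mu>\<close>, hence
  the index, away from 1.\<close>

lemma unbounded_closed_convex_contains_ray:
  fixes S :: "'a::euclidean_space set"
  assumes "closed S" and "convex S" and "0 \<in> S" and "\<not> bounded S"
  obtains z where "norm z = 1" and "\<And>t. t \<ge> 0 \<Longrightarrow> t *\<^sub>R z \<in> S"
proof -
  have "\<forall>n::nat. \<exists>y\<in>S. real n < norm y"
    using assms(4) unfolding bounded_iff by (meson not_le)
  then obtain y where y: "\<And>n. y n \<in> S \<and> real n < norm (y n)" by metis
  define z where "z n = (1 / norm (y n)) *\<^sub>R y n" for n
  have norm_y_pos: "norm (y n) > 0" for n
    using y[of n] of_nat_0_le_iff[of n] by linarith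
  have "\<forall>n. z n \<in> sphere 0 1"
    using norm_y_pos by (simp add: z_def)
  then obtain z0 \<sigma> where z0: "z0 \<in> sphere 0 1" and \<sigma>: "strict_mono \<sigma>"
    and lim: "(z \<circ> \<sigma>) \<longlonglongrightarrow> z0"
    using seq_compactE[OF compact_imp_seq_compact[OF compact_sphere]] by metis
  have "t *\<^sub>R z0 \<in> S" if t: "t \<ge> 0" for t
  proof (rule Lim_in_closed_set[OF assms(1)])
    show "((\<lambda>n. t *\<^sub>R (z \<circ> \<sigma>) n) \<longlongrightarrow> t *\<^sub>R z0) sequentially"
      by (intro tendsto_intros lim)
    show "eventually (\<lambda>n. t *\<^sub>R (z \<circ> \<sigma>) n \<in> S) sequentially"
    proof (rule eventually_sequentiallyI[of "nat \<lceil>t\<rceil>"])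
      fix n assume "nat \<lceil>t\<rceil> \<le> n"
      then have "t \<le> real (\<sigma> n)"
        using seq_suble[OF \<sigma>, of n] by linarith
      then have s: "t / norm (y (\<sigma> n)) \<le> 1"
        using y[of "\<sigma> n"] norm_y_pos[of "\<sigma> n"] by (simp add: field_simps)
      have "(1 - t / norm (y (\<sigma> n))) *\<^sub>R 0 + (t / norm (y (\<sigma> n))) *\<^sub>R y (\<sigma> n) \<in> S"
        using convexD[OF assms(2,3) conjunct1[OF y[of "\<sigma> n"]], of "1 - t / norm (y (\<sigma> n))"]
          s t norm_y_pos[of "\<sigma> n"] by simp
      then show "t *\<^sub>R (z \<circ> \<sigma>) n \<in> S" by (simp add: z_def)
    qed
  qed simp
  with z0 that show ?thesis by simp
qed

lemma scaleR_eq_smult: "r *\<^sub>R (x::complex^'d) = complex_of_real r *s x"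
  unfolding vec_eq_iff by (simp add: scaleR_conv_of_real[where 'a=complex])

lemma mdiag_1_map: "f 0 = 0 \<Longrightarrow> (\<lambda>i j. f (mdiag 1 x i j)) = mdiag 1 (f x)"
  by (auto simp: mdiag_def fun_eq_iff)

lemma mdiag_1_add: "(\<lambda>i j. mdiag 1 x i j + mdiag 1 y i j) = mdiag 1 (x + y :: 'a::monoid_add)"
  by (auto simp: mdiag_def fun_eq_iff)

lemma closed_operator_subsystem: "operator_subsystem star e X0 \<Longrightarrow> closed X0"
  by (rule closed_subspace) (simp add: operator_subsystem_def subspace_def scaleR_eq_smult)

locale opsys =
  fixes star :: "complex^'d \<Rightarrow> complex^'d" and e :: "complex^'d"
    and C :: "nat \<Rightarrow> (nat \<Rightarrow> nat \<Rightarrow> complex^'d) set"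
  assumes operator_system: "operator_system star e C"
begin

lemma star_add [rule_format]: "\<forall>x y. star (x + y) = star x + star y"
  using operator_system unfolding operator_system_def by (elim conjE) assumption

lemma star_smult [rule_format]: "\<forall>c x. star (c *s x) = cnj c *s star x"
  using operator_system unfolding operator_system_def by (elim conjE) assumption

lemma star_star [rule_format]: "\<forall>x. star (star x) = x"
  using operator_system unfolding operator_system_def by (elim conjE) assumption

lemma star_unit: "star e = e"
  using operator_system unfolding operator_system_def by (elim conjE) assumption

lemma matrix_cone_self_adjoint: "\<forall>n. C n \<subseteq> {M \<in> mat_n n. madj star n M = M}"
  using operator_system unfolding operator_system_def by (elim conjE) assumption

lemma matrix_cone_add [rule_format]: "\<forall>n M N. M \<in> C n \<longrightarrow> N \<in> C n \<longrightarrow> (\<lambda>i j. M i j + N i j) \<in> C n"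
  using operator_system unfolding operator_system_def by (elim conjE) assumption

lemma matrix_cone_scale [rule_format]:
    "\<forall>n M (r::real). M \<in> C n \<longrightarrow> r \<ge> 0 \<longrightarrow> (\<lambda>i j. complex_of_real r *s M i j) \<in> C n"
  using operator_system unfolding operator_system_def by (elim conjE) assumption

lemma matrix_cone_congruence [rule_format]: "\<forall>n m A M. M \<in> C n \<longrightarrow> mcongr n m A M \<in> C m"
  using operator_system unfolding operator_system_def by (elim conjE) assumption

lemma matrix_cone_pointed [rule_format]: "\<forall>n M. M \<in> C n \<longrightarrow> (\<lambda>i j. - M i j) \<in> C n \<longrightarrow> M = (\<lambda>i j. 0)"
  using operator_system unfolding operator_system_def by (elim conjE) assumption

lemma matrix_order_unit [rule_format]: "\<forall>n H. H \<in> mat_n n \<longrightarrow> madj star n H = H \<longrightarrow>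
        (\<exists>r>0. (\<lambda>i j. complex_of_real r *s mdiag n e i j + H i j) \<in> C n)"
  using operator_system unfolding operator_system_def by (elim conjE) assumption

lemma matrix_archimedean [rule_format]: "\<forall>n H. H \<in> mat_n n \<longrightarrow> madj star n H = H \<longrightarrow>
        (\<forall>r>0. (\<lambda>i j. complex_of_real r *s mdiag n e i j + H i j) \<in> C n) \<longrightarrow> H \<in> C n"
  using operator_system unfolding operator_system_def by (elim conjE) assumption

lemma linear_star: "linear star"
  by (rule linearI) (simp_all add: star_add star_smult scaleR_eq_smult)

lemma star_zero: "star 0 = 0"
  using linear_0[OF linear_star] .

lemma star_minus: "star (- x) = - star x"
  using linear_neg[OF linear_star] .

lemma star_diff: "star (x - y) = star x - star y"
  using linear_diff[OF linear_star] .

lemma star_scaleR: "star (r *\<^sub>R x) = r *\<^sub>R star x"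
  using linear_scale[OF linear_star] .

lemma closed_self_adjoint: "closed {x. star x = x}"
  using linear_continuous_on[OF linear_conv_bounded_linear[THEN iffD1, OF linear_star]]
  by (intro closed_Collect_eq continuous_on_id)

definition Pos :: "(complex^'d) set" where
  "Pos = {y. mdiag 1 y \<in> C 1}"

lemma Pos_self_adjoint: "y \<in> Pos \<Longrightarrow> star y = y"
proof -
  assume "y \<in> Pos"
  then have "madj star 1 (mdiag 1 y) = mdiag 1 y"
    using matrix_cone_self_adjoint unfolding Pos_def by blast
  then have "madj star 1 (mdiag 1 y) 0 0 = mdiag 1 y 0 0" by simp
  then show ?thesis by (simp add: madj_def mdiag_def)
qed

lemma Pos_add: "x \<in> Pos \<Longrightarrow> y \<in> Pos \<Longrightarrow> x + y \<in> Pos"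
  using matrix_cone_add[of "mdiag 1 x" 1 "mdiag 1 y"] unfolding Pos_def mdiag_1_add by simp

lemma Pos_scaleR: "x \<in> Pos \<Longrightarrow> r \<ge> 0 \<Longrightarrow> r *\<^sub>R x \<in> Pos"
  using matrix_cone_scale[of "mdiag 1 x" 1 r] mdiag_1_map[of "\<lambda>v. complex_of_real r *s v" x]
  unfolding Pos_def scaleR_eq_smult by simp

lemma Pos_pointed: "x \<in> Pos \<Longrightarrow> - x \<in> Pos \<Longrightarrow> x = 0"
proof -
  assume x: "x \<in> Pos" and minus_x: "- x \<in> Pos"
  have "(\<lambda>i j. - mdiag 1 x i j) \<in> C 1"
    using minus_x mdiag_1_map[of uminus x] unfolding Pos_def by simp
  then have "mdiag 1 x = (\<lambda>i j. 0)"
    using matrix_cone_pointed x unfolding Pos_def by blast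
  then have "mdiag 1 x 0 0 = 0" by simp
  then show ?thesis by (simp add: mdiag_def)
qed

lemma mdiag_1_order_unit:
  "(\<lambda>i j. complex_of_real r *s mdiag 1 e i j + mdiag 1 h i j) = mdiag 1 (r *\<^sub>R e + h)"
  by (auto simp: mdiag_def fun_eq_iff scaleR_eq_smult)

lemma madj_mdiag_1: "star h = h \<Longrightarrow> madj star 1 (mdiag 1 h) = mdiag 1 h"
  by (auto simp: madj_def mdiag_def fun_eq_iff star_zero)

lemma mdiag_1_mat_n: "mdiag 1 h \<in> mat_n 1"
  by (simp add: mat_n_def mdiag_def)

lemma Pos_order_unit: "star h = h \<Longrightarrow> \<exists>r>0. r *\<^sub>R e + h \<in> Pos"
  using matrix_order_unit[OF mdiag_1_mat_n madj_mdiag_1[of h]]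
  unfolding Pos_def mdiag_1_order_unit by simp

lemma Pos_archimedean: "star h = h \<Longrightarrow> (\<And>r. r > 0 \<Longrightarrow> r *\<^sub>R e + h \<in> Pos) \<Longrightarrow> h \<in> Pos"
  using matrix_archimedean[OF mdiag_1_mat_n madj_mdiag_1[of h]]
  unfolding Pos_def mdiag_1_order_unit by simp

lemma unit_Pos: "e \<in> Pos"
proof -
  obtain r where r: "r > 0" "r *\<^sub>R e + 0 \<in> Pos"
    using Pos_order_unit[of 0] star_zero by blast
  then show ?thesis using Pos_scaleR[of "r *\<^sub>R e" "1 / r"] by simp
qed

lemma zero_Pos: "0 \<in> Pos"
  using Pos_scaleR[OF unit_Pos, of 0] by simp

lemma Pos_sum: "(\<And>k. k \<in> A \<Longrightarrow> f k \<in> Pos) \<Longrightarrow> sum f A \<in> Pos"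
  by (induction A rule: infinite_finite_induct) (simp_all add: zero_Pos Pos_add)

lemma convex_Pos: "convex Pos"
  by (rule convexI) (simp add: Pos_add Pos_scaleR)

lemma Pos_shift_unit: "r *\<^sub>R e + x \<in> Pos \<Longrightarrow> r \<le> s \<Longrightarrow> s *\<^sub>R e + x \<in> Pos"
  using Pos_add[of "r *\<^sub>R e + x" "(s - r) *\<^sub>R e"] Pos_scaleR[OF unit_Pos, of "s - r"]
  by (simp add: algebra_simps)

lemma Pos_order_unit_interval:
  assumes "star x = x"
  obtains r where "r > 0" and "r *\<^sub>R e - x \<in> Pos" and "r *\<^sub>R e + x \<in> Pos"
proof -
  obtain r where r: "r > 0" "r *\<^sub>R e + x \<in> Pos"
    using Pos_order_unit assms by blast
  obtain s where s: "s > 0" "s *\<^sub>R e + - x \<in> Pos"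
    using Pos_order_unit[of "- x"] assms star_minus by auto
  have "(r + s) *\<^sub>R e - x \<in> Pos" and "(r + s) *\<^sub>R e + x \<in> Pos"
    using Pos_shift_unit[OF s(2), of "r + s"] Pos_shift_unit[OF r(2), of "r + s"] r(1) s(1) by simp_all
  then show ?thesis using that[of "r + s"] r(1) s(1) by simp
qed

lemma Pos_abs_scaleR:
  assumes "r *\<^sub>R e - x \<in> Pos" and "r *\<^sub>R e + x \<in> Pos"
  shows "(\<bar>a\<bar> * r) *\<^sub>R e + a *\<^sub>R x \<in> Pos"
proof (cases "a \<ge> 0")
  case True
  then show ?thesis using Pos_scaleR[OF assms(2), of a] by (simp add: algebra_simps)
next
  case False
  then show ?thesis using Pos_scaleR[OF assms(1), of "- a"] by (simp add: algebra_simps)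
qed

definition re_part :: "complex^'d \<Rightarrow> complex^'d" where
  "re_part x = (1/2) *s (x + star x)"

definition im_part :: "complex^'d \<Rightarrow> complex^'d" where
  "im_part x = (- \<i>/2) *s (x - star x)"

lemma re_part_self_adjoint: "star (re_part x) = re_part x"
  by (simp add: re_part_def star_smult star_add star_star add.commute)

lemma im_part_self_adjoint: "star (im_part x) = im_part x"
  by (simp add: im_part_def star_smult star_diff star_star vec_eq_iff algebra_simps)

lemma re_im_part_decomposition: "re_part x + \<i> *s im_part x = x"
  by (simp add: re_part_def im_part_def vec_eq_iff algebra_simps)

lemma re_part_self_adjoint_eq: "star x = x \<Longrightarrow> re_part x = x"
  by (simp add: re_part_def vec_eq_iff)

lemma re_part_smult: "re_part (c *s x) = Re c *\<^sub>R re_part x - Im c *\<^sub>R im_part x"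
  by (simp add: re_part_def im_part_def star_smult scaleR_eq_smult vec_eq_iff complex_eq_iff
      field_simps)

lemma re_part_sum: "re_part (sum f A) = (\<Sum>k\<in>A. re_part (f k))"
  by (induction A rule: infinite_finite_induct)
    (simp_all add: re_part_def star_zero star_add vec_eq_iff algebra_simps)

lemma self_adjoint_zero_if_unit_zero: "e = 0 \<Longrightarrow> star h = h \<Longrightarrow> h = 0"
  using Pos_order_unit[of h] Pos_order_unit[of "- h"] star_minus Pos_pointed by auto

lemma unit_neq_zero: "e \<noteq> 0"
proof
  assume "e = 0"
  then have "re_part x = 0" and "im_part x = 0" for x :: "complex^'d"
    using self_adjoint_zero_if_unit_zero re_part_self_adjoint im_part_self_adjoint by blast+
  then have "x = 0" for x :: "complex^'d"
    using re_im_part_decomposition[of x] by simp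
  then show False
    using zero_neq_one by metis
qed

lemma Pos_bound_combination:
  assumes "finite A" and "\<And>k. k \<in> A \<Longrightarrow> star (g k) = g k"
  obtains R where "R \<ge> 0"
    and "\<And>c. (R * (\<Sum>k\<in>A. \<bar>c k\<bar>)) *\<^sub>R e + (\<Sum>k\<in>A. c k *\<^sub>R g k) \<in> Pos"
proof -
  have "\<forall>k\<in>A. \<exists>r. r > 0 \<and> r *\<^sub>R e - g k \<in> Pos \<and> r *\<^sub>R e + g k \<in> Pos"
    using Pos_order_unit_interval assms(2) by metis
  then obtain r where r: "\<And>k. k \<in> A \<Longrightarrow> r k > 0 \<and> r k *\<^sub>R e - g k \<in> Pos \<and> r k *\<^sub>R e + g k \<in> Pos"
    by metis
  define R where "R = (\<Sum>k\<in>A. r k)"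
  have r_le_R: "r k \<le> R" if "k \<in> A" for k
    unfolding R_def using assms(1) that r by (intro member_le_sum) (auto intro: less_imp_le)
  have R_nonneg: "R \<ge> 0"
    unfolding R_def using r by (intro sum_nonneg) (auto intro: less_imp_le)
  have "(R * (\<Sum>k\<in>A. \<bar>c k\<bar>)) *\<^sub>R e + (\<Sum>k\<in>A. c k *\<^sub>R g k) \<in> Pos" for c
  proof -
    have "(\<bar>c k\<bar> * R) *\<^sub>R e + c k *\<^sub>R g k \<in> Pos" if k: "k \<in> A" for k
      using Pos_abs_scaleR[of "r k" "g k" "c k"] r[OF k] r_le_R[OF k]
        Pos_shift_unit[of "\<bar>c k\<bar> * r k" "c k *\<^sub>R g k" "\<bar>c k\<bar> * R"]
      by (simp add: mult_left_mono)
    then have "(\<Sum>k\<in>A. (\<bar>c k\<bar> * R) *\<^sub>R e + c k *\<^sub>R g k) \<in> Pos"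
      by (rule Pos_sum)
    then show ?thesis
      by (simp add: sum.distrib scaleR_sum_left sum_distrib_left mult.commute)
  qed
  with R_nonneg that show ?thesis by blast
qed

lemma unit_dominates_norm:
  obtains K where "K > 0" and "\<And>w. star w = w \<Longrightarrow> (K * norm w) *\<^sub>R e + w \<in> Pos"
proof -
  define b where "b j = (axis j 1 :: complex^'d)" for j
  obtain R1 where R1: "R1 \<ge> 0"
    "\<And>c. (R1 * (\<Sum>j\<in>UNIV. \<bar>c j\<bar>)) *\<^sub>R e + (\<Sum>j\<in>UNIV. c j *\<^sub>R re_part (b j)) \<in> Pos"
    by (rule Pos_bound_combination[of UNIV "\<lambda>j. re_part (b j)"]) (simp_all add: re_part_self_adjoint)
  obtain R2 where R2: "R2 \<ge> 0"
    "\<And>c. (R2 * (\<Sum>j\<in>UNIV. \<bar>c j\<bar>)) *\<^sub>R e + (\<Sum>j\<in>UNIV. c j *\<^sub>R im_part (b j)) \<in> Pos"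
    by (rule Pos_bound_combination[of UNIV "\<lambda>j. im_part (b j)"]) (simp_all add: im_part_self_adjoint)
  define K where "K = (R1 + R2) * CARD('d) + 1"
  have "(K * norm w) *\<^sub>R e + w \<in> Pos" if w: "star w = w" for w
  proof -
    define a where "a j = Re (w $ j)" for j
    define c where "c j = - Im (w $ j)" for j
    have w_eq: "w = (\<Sum>j\<in>UNIV. a j *\<^sub>R re_part (b j)) + (\<Sum>j\<in>UNIV. c j *\<^sub>R im_part (b j))"
    proof -
      have "w = re_part (\<Sum>j\<in>UNIV. w $ j *s b j)"
        using re_part_self_adjoint_eq[OF w] basis_expansion[of w] by (simp add: b_def)
      then show ?thesis
        by (simp add: re_part_sum re_part_smult a_def c_def sum.distrib sum_subtractf sum_negf)
    qed
    have coord_bound: "(\<Sum>j\<in>UNIV. \<bar>f (w $ j)\<bar>) \<le> CARD('d) * norm w"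
      if "\<And>z. \<bar>f z\<bar> \<le> cmod z" for f
    proof -
      have "\<bar>f (w $ j)\<bar> \<le> norm w" for j
        using that[of "w $ j"] Finite_Cartesian_Product.norm_nth_le[of w j] by linarith
      then have "(\<Sum>j\<in>UNIV. \<bar>f (w $ j)\<bar>) \<le> (\<Sum>j\<in>(UNIV::'d set). norm w)"
        by (rule sum_mono)
      then show ?thesis by simp
    qed
    have "(R1 * (\<Sum>j\<in>UNIV. \<bar>a j\<bar>) + R2 * (\<Sum>j\<in>UNIV. \<bar>c j\<bar>)) *\<^sub>R e + w \<in> Pos"
      using Pos_add[OF R1(2)[of a] R2(2)[of c]] w_eq by (simp add: algebra_simps)
    moreover have "R1 * (\<Sum>j\<in>UNIV. \<bar>a j\<bar>) + R2 * (\<Sum>j\<in>UNIV. \<bar>c j\<bar>) \<le> K * norm w"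
    proof -
      have "R1 * (\<Sum>j\<in>UNIV. \<bar>a j\<bar>) \<le> R1 * (CARD('d) * norm w)"
        using coord_bound[of Re] R1(1) abs_Re_le_cmod by (simp add: a_def mult_left_mono)
      moreover have "R2 * (\<Sum>j\<in>UNIV. \<bar>c j\<bar>) \<le> R2 * (CARD('d) * norm w)"
        using coord_bound[of Im] R2(1) abs_Im_le_cmod by (simp add: c_def mult_left_mono)
      moreover have "R1 * (CARD('d) * norm w) + R2 * (CARD('d) * norm w) \<le> K * norm w"
        unfolding K_def by (simp add: algebra_simps)
      ultimately show ?thesis by linarith
    qed
    ultimately show ?thesis by (rule Pos_shift_unit)
  qed
  moreover have "K > 0"
  proof -
    have "(R1 + R2) * CARD('d) \<ge> 0" using R1(1) R2(1) by simp
    then show ?thesis unfolding K_def by linarith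
  qed
  ultimately show ?thesis using that by blast
qed

lemma closed_Pos: "closed Pos"
proof (rule closed_sequential_limits[THEN iffD2], intro allI impI, elim conjE)
  fix x :: "nat \<Rightarrow> complex^'d" and l
  assume x: "\<forall>n. x n \<in> Pos" and lim: "x \<longlonglongrightarrow> l"
  have l_self_adjoint: "star l = l"
    using closed_sequentially[OF closed_self_adjoint _ lim] x Pos_self_adjoint by blast
  obtain K where K: "K > 0" "\<And>w. star w = w \<Longrightarrow> (K * norm w) *\<^sub>R e + w \<in> Pos"
    using unit_dominates_norm by blast
  show "l \<in> Pos"
  proof (rule Pos_archimedean[OF l_self_adjoint])
    fix r :: real assume "r > 0"
    then obtain n where "dist (x n) l < r / K"
      using lim K(1) unfolding lim_sequentially by (metis divide_pos_pos order_refl)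
    then have small: "K * norm (l - x n) < r"
      using K(1) by (simp add: dist_norm norm_minus_commute field_simps)
    have "star (l - x n) = l - x n"
      using l_self_adjoint Pos_self_adjoint x by (simp add: star_diff)
    then have "x n + ((K * norm (l - x n)) *\<^sub>R e + (l - x n)) \<in> Pos"
      using Pos_add x K(2) by blast
    then show "r *\<^sub>R e + l \<in> Pos"
      using Pos_shift_unit[of "K * norm (l - x n)" l r] small by simp
  qed
qed

lemma bounded_order_interval: "bounded {y. e - y \<in> Pos \<and> e + y \<in> Pos}"
proof (rule ccontr)
  let ?I = "{y. e - y \<in> Pos \<and> e + y \<in> Pos}"
  assume unbounded: "\<not> bounded ?I"
  have "closed ?I"
  proof -
    have "closed ((\<lambda>y. e - y) -` Pos \<inter> (\<lambda>y. e + y) -` Pos)"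
      by (intro closed_Int continuous_closed_vimage closed_Pos continuous_intros)
    moreover have "?I = (\<lambda>y. e - y) -` Pos \<inter> (\<lambda>y. e + y) -` Pos" by auto
    ultimately show ?thesis by simp
  qed
  moreover have "convex ?I"
  proof (rule convexI)
    fix x y :: "complex^'d" and u v :: real
    assume "x \<in> ?I" "y \<in> ?I" "0 \<le> u" "0 \<le> v" and uv: "u + v = 1"
    then have "u *\<^sub>R (e - x) + v *\<^sub>R (e - y) \<in> Pos" "u *\<^sub>R (e + x) + v *\<^sub>R (e + y) \<in> Pos"
      using convexD[OF convex_Pos] uv by simp_all
    moreover have "u *\<^sub>R (e - x) + v *\<^sub>R (e - y) = (u + v) *\<^sub>R e - (u *\<^sub>R x + v *\<^sub>R y)"
      and "u *\<^sub>R (e + x) + v *\<^sub>R (e + y) = (u + v) *\<^sub>R e + (u *\<^sub>R x + v *\<^sub>R y)"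
      by (simp_all add: algebra_simps)
    ultimately show "u *\<^sub>R x + v *\<^sub>R y \<in> ?I"
      using uv by simp
  qed
  moreover have "0 \<in> ?I" using unit_Pos by simp
  ultimately obtain z where z: "norm z = 1" and ray: "\<And>t. t \<ge> 0 \<Longrightarrow> t *\<^sub>R z \<in> ?I"
    using unbounded by (rule unbounded_closed_convex_contains_ray) blast
  have z_self_adjoint: "star z = z"
    using Pos_self_adjoint[of "e + z"] ray[of 1] by (simp add: star_add star_unit)
  have "s *\<^sub>R z \<in> Pos" if "s = 1 \<or> s = -1" for s
  proof (rule Pos_archimedean)
    show "star (s *\<^sub>R z) = s *\<^sub>R z" by (simp add: star_scaleR z_self_adjoint)
    fix r :: real assume r: "r > 0"
    have "r *\<^sub>R (e + s *\<^sub>R ((1 / r) *\<^sub>R z)) \<in> Pos"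
      using ray[of "1 / r"] r that Pos_scaleR by auto
    then show "r *\<^sub>R e + s *\<^sub>R z \<in> Pos"
      using r by (simp add: algebra_simps)
  qed
  then have "z = 0"
    using Pos_pointed[of z] by force
  with z show False by simp
qed

lemma norm_le_order_unit_bound:
  obtains B where "B > 0" and "\<And>r y. r *\<^sub>R e - y \<in> Pos \<Longrightarrow> r *\<^sub>R e + y \<in> Pos \<Longrightarrow> norm y \<le> r * B"
proof -
  obtain B0 where B0: "\<And>y. e - y \<in> Pos \<Longrightarrow> e + y \<in> Pos \<Longrightarrow> norm y \<le> B0"
    using bounded_order_interval unfolding bounded_iff by blast
  define B where "B = max B0 1"
  have "norm y \<le> r * B" if minus: "r *\<^sub>R e - y \<in> Pos" and plus: "r *\<^sub>R e + y \<in> Pos" for r y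
  proof (cases "r > 0")
    case True
    have "e - (1 / r) *\<^sub>R y \<in> Pos" "e + (1 / r) *\<^sub>R y \<in> Pos"
      using Pos_scaleR[OF minus, of "1 / r"] Pos_scaleR[OF plus, of "1 / r"] True
      by (simp_all add: algebra_simps)
    then have "norm ((1 / r) *\<^sub>R y) \<le> B0"
      by (rule B0)
    then have "norm y \<le> r * B0"
      using True by (simp add: field_simps)
    also have "\<dots> \<le> r * B"
      using True unfolding B_def by (simp add: mult_left_mono)
    finally show ?thesis .
  next
    case False
    have "(r *\<^sub>R e - y) + (r *\<^sub>R e + y) = (r + r) *\<^sub>R e"
      by (metis scaleR_add_left diff_add_eq add_diff_cancel_right' add.assoc add.commute)
    then have "(r + r) *\<^sub>R e \<in> Pos"
      using Pos_add[OF minus plus] by simp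
    moreover have "- ((r + r) *\<^sub>R e) \<in> Pos"
      using Pos_scaleR[OF unit_Pos, of "- (r + r)"] False by simp
    ultimately have "(r + r) *\<^sub>R e = 0"
      by (rule Pos_pointed)
    then have "r = 0"
      using unit_neq_zero by simp
    then have "y = 0"
      using Pos_pointed[of y] minus plus by simp
    then show ?thesis using \<open>r = 0\<close> by simp
  qed
  moreover have "B > 0" unfolding B_def by simp
  ultimately show ?thesis using that by blast
qed

lemma smult_unit_Pos: "c *s e \<in> Pos \<Longrightarrow> c = complex_of_real (Re c) \<and> Re c \<ge> 0"
proof -
  assume pos: "c *s e \<in> Pos"
  then have "cnj c *s e = c *s e"
    using Pos_self_adjoint[OF pos] by (simp add: star_smult star_unit)
  moreover obtain j where "e $ j \<noteq> 0"
    using unit_neq_zero by (auto simp: vec_eq_iff)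
  ultimately have "cnj c = c"
    by (metis mult_cancel_right vector_smult_component)
  then have real: "c = complex_of_real (Re c)"
    by (simp add: complex_eq_iff)
  have "Re c \<ge> 0"
  proof (rule ccontr)
    assume "\<not> Re c \<ge> 0"
    have c_e: "c *s e = Re c *\<^sub>R e"
      by (subst real) (simp add: scaleR_eq_smult)
    have "- (Re c *\<^sub>R e) \<in> Pos"
      using Pos_scaleR[OF unit_Pos, of "- Re c"] \<open>\<not> Re c \<ge> 0\<close> by simp
    then have "Re c *\<^sub>R e = 0"
      using Pos_pointed pos unfolding c_e by blast
    then show False using unit_neq_zero \<open>\<not> Re c \<ge> 0\<close> by simp
  qed
  with real show ?thesis by blast
qed

lemma CP_map_Pos: "CP_map C \<psi> \<Longrightarrow> x \<in> Pos \<Longrightarrow> \<psi> x \<in> Pos"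
proof -
  assume cp: "CP_map C \<psi>" and "x \<in> Pos"
  have "\<psi> 0 = 0"
    using cp unfolding CP_map_def clinear_map_def by (metis vector_smult_lzero)
  moreover have "(\<lambda>i j. \<psi> (mdiag 1 x i j)) \<in> C 1"
    using cp \<open>x \<in> Pos\<close> unfolding CP_map_def Pos_def by blast
  ultimately show ?thesis
    using mdiag_1_map[of \<psi> x] by (simp add: Pos_def)
qed

lemma os_norm_scaleR_unit_ge:
  assumes "c \<ge> 0"
  shows "c \<le> os_norm star e C (c *\<^sub>R e)"
proof -
  define M where "M r = (\<lambda>(i::nat) (j::nat). if i = 0 \<and> j = 0 then complex_of_real r *s e
             else if i = 0 \<and> j = 1 then c *\<^sub>R e
             else if i = 1 \<and> j = 0 then star (c *\<^sub>R e)
             else if i = 1 \<and> j = 1 then complex_of_real r *s e else 0)" for r :: real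
  define S where "S = {r. r \<ge> 0 \<and> M r \<in> C 2}"
  have os_norm_eq: "os_norm star e C (c *\<^sub>R e) = Inf S"
    unfolding os_norm_def S_def M_def ..
  have "mcongr 1 2 (\<lambda>i k. 1) (mdiag 1 (c *\<^sub>R e)) \<in> C 2"
    using matrix_cone_congruence Pos_scaleR[OF unit_Pos assms] unfolding Pos_def by blast
  moreover have "mcongr 1 2 (\<lambda>i k. 1) (mdiag 1 (c *\<^sub>R e)) = M c"
    unfolding M_def mcongr_def mdiag_def fun_eq_iff
    by (auto simp: star_smult star_unit scaleR_eq_smult)
  ultimately have "c \<in> S"
    using assms unfolding S_def by simp
  moreover have "c \<le> r" if "r \<in> S" for r
  proof (rule ccontr)
    assume "\<not> c \<le> r"
    have "mcongr 2 1 (\<lambda>i k. if i = 0 then 1 else -1) (M r) \<in> C 1"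
      using that matrix_cone_congruence unfolding S_def by blast
    moreover have "mcongr 2 1 (\<lambda>i k. if i = 0 then 1 else -1) (M r) = mdiag 1 ((2*r - 2*c) *\<^sub>R e)"
      unfolding M_def mcongr_def mdiag_def fun_eq_iff
      by (auto simp: star_smult star_unit scaleR_eq_smult numeral_2_eq_2 lessThan_Suc vec_eq_iff
          algebra_simps)
    ultimately have "(2*r - 2*c) *\<^sub>R e \<in> Pos"
      unfolding Pos_def by simp
    moreover have "- ((2*r - 2*c) *\<^sub>R e) \<in> Pos"
      using Pos_scaleR[OF unit_Pos, of "2*c - 2*r"] \<open>\<not> c \<le> r\<close> by (simp add: algebra_simps)
    ultimately have "(2*r - 2*c) *\<^sub>R e = 0"
      by (rule Pos_pointed)
    then show False
      using unit_neq_zero \<open>\<not> c \<le> r\<close> by simp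
  qed
  ultimately show ?thesis
    unfolding os_norm_eq by (intro cInf_greatest) auto
qed

lemma CP_perturbation_bound:
  obtains K where "K > 0" and "\<And>\<phi> c h. CP_map C (\<lambda>x. \<phi> x - x) \<Longrightarrow> \<phi> e = c *s e \<Longrightarrow> star h = h \<Longrightarrow>
      norm (\<phi> h - h) \<le> (os_norm star e C (\<phi> e) - 1) * (K * norm h)"
proof -
  obtain D where D: "D > 0" "\<And>w. star w = w \<Longrightarrow> (D * norm w) *\<^sub>R e + w \<in> Pos"
    using unit_dominates_norm by blast
  obtain B where B: "B > 0" "\<And>r y. r *\<^sub>R e - y \<in> Pos \<Longrightarrow> r *\<^sub>R e + y \<in> Pos \<Longrightarrow> norm y \<le> r * B"
    using norm_le_order_unit_bound by blast
  have "norm (\<phi> h - h) \<le> (os_norm star e C (\<phi> e) - 1) * (D * B * norm h)"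
    if cp: "CP_map C (\<lambda>x. \<phi> x - x)" and scalar: "\<phi> e = c *s e" and h: "star h = h" for \<phi> c h
  proof -
    define \<psi> where "\<psi> = (\<lambda>x. \<phi> x - x)"
    have \<psi>_Pos: "x \<in> Pos \<Longrightarrow> \<psi> x \<in> Pos" for x
      using CP_map_Pos cp unfolding \<psi>_def by blast
    have \<psi>_add: "\<psi> (x + y) = \<psi> x + \<psi> y" and \<psi>_scaleR: "\<psi> (s *\<^sub>R x) = s *\<^sub>R \<psi> x" for x y s
      using cp unfolding CP_map_def clinear_map_def \<psi>_def by (simp_all add: scaleR_eq_smult)
    have "\<psi> e = (c - 1) *s e"
      unfolding \<psi>_def scalar by simp
    then obtain \<mu> where \<mu>: "\<mu> \<ge> 0" "\<psi> e = \<mu> *\<^sub>R e"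
      using smult_unit_Pos[of "c - 1"] \<psi>_Pos[OF unit_Pos] by (metis scaleR_eq_smult)
    define r where "r = D * norm h"
    have "r *\<^sub>R e - h \<in> Pos" and "r *\<^sub>R e + h \<in> Pos"
      using D(2)[OF h] D(2)[of "- h"] h star_minus unfolding r_def by simp_all
    moreover have "\<psi> (r *\<^sub>R e - h) = (r * \<mu>) *\<^sub>R e - \<psi> h"
      using \<psi>_add[of "r *\<^sub>R e" "(-1) *\<^sub>R h"] \<psi>_scaleR[of r e] \<psi>_scaleR[of "-1" h] \<mu>(2) by simp
    moreover have "\<psi> (r *\<^sub>R e + h) = (r * \<mu>) *\<^sub>R e + \<psi> h"
      using \<psi>_add[of "r *\<^sub>R e" h] \<psi>_scaleR[of r e] \<mu>(2) by simp
    ultimately have "norm (\<psi> h) \<le> (r * \<mu>) * B"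
      using \<psi>_Pos B(2) by metis
    also have "\<dots> = \<mu> * (D * B * norm h)"
      unfolding r_def by (simp add: ac_simps)
    also have "\<dots> \<le> (os_norm star e C (\<phi> e) - 1) * (D * B * norm h)"
    proof (rule mult_right_mono)
      show "\<mu> \<le> os_norm star e C (\<phi> e) - 1"
        using os_norm_scaleR_unit_ge[of "1 + \<mu>"] \<mu> unfolding \<psi>_def by (simp add: algebra_simps)
      show "0 \<le> D * B * norm h"
        using D(1) B(1) by simp
    qed
    finally show ?thesis
      unfolding \<psi>_def .
  qed
  moreover have "D * B > 0"
    using D(1) B(1) by simp
  ultimately show ?thesis
    using that by blast
qed

lemma self_adjoint_outside_subsystem:
  assumes "operator_subsystem star e X0" and "X0 \<noteq> UNIV"
  obtains h where "star h = h" and "h \<notin> X0"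
proof -
  obtain x where x: "x \<notin> X0" using assms(2) by blast
  have "re_part x \<notin> X0 \<or> im_part x \<notin> X0"
  proof (rule ccontr)
    assume "\<not> ?thesis"
    then have "re_part x + \<i> *s im_part x \<in> X0"
      using assms(1) unfolding operator_subsystem_def by blast
    with x show False by (simp add: re_im_part_decomposition)
  qed
  then show ?thesis
    using that re_part_self_adjoint im_part_self_adjoint by blast
qed

end

theorem proposition3p2:
  fixes star :: "complex^'d \<Rightarrow> complex^'d" and e :: "complex^'d"
    and C :: "nat \<Rightarrow> (nat \<Rightarrow> nat \<Rightarrow> complex^'d) set" and X0 :: "(complex^'d) set"
  assumes "operator_system star e C"
    and "operator_subsystem star e X0"
    and "X0 \<noteq> UNIV"
  shows "Ind_CP star e C X0 > 1"
proof -
  interpret opsys star e C by (rule opsys.intro) (rule assms(1))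
  obtain K where K: "K > 0" and perturbation: "\<And>\<phi> c h. CP_map C (\<lambda>x. \<phi> x - x) \<Longrightarrow>
      \<phi> e = c *s e \<Longrightarrow> star h = h \<Longrightarrow> norm (\<phi> h - h) \<le> (os_norm star e C (\<phi> e) - 1) * (K * norm h)"
    using CP_perturbation_bound by blast
  obtain h where h: "star h = h" "h \<notin> X0"
    using self_adjoint_outside_subsystem assms(2,3) by blast
  have "0 \<in> X0" using assms(2) unfolding operator_subsystem_def by blast
  then have dist_pos: "infdist h X0 > 0" and "h \<noteq> 0"
    using infdist_pos_not_in_closed[OF closed_operator_subsystem[OF assms(2)]] h(2) by auto
  define \<delta> where "\<delta> = infdist h X0 / (K * norm h)"
  have "ereal (1 + \<delta>) \<le> ereal (os_norm star e C (\<phi> e))"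
    if scalar: "\<forall>c. \<exists>c'. \<phi> (c *s e) = c' *s e" and range: "range \<phi> \<subseteq> X0"
      and cp: "CP_map C (\<lambda>x. \<phi> x - x)" for \<phi>
  proof -
    obtain c where "\<phi> e = c *s e" using scalar by (metis vector_smult_lid)
    have "infdist h X0 \<le> dist h (\<phi> h)"
      using range by (intro infdist_le) blast
    also have "\<dots> \<le> (os_norm star e C (\<phi> e) - 1) * (K * norm h)"
      using perturbation[OF cp \<open>\<phi> e = c *s e\<close> h(1)] by (simp add: dist_norm norm_minus_commute)
    finally show ?thesis
      using K \<open>h \<noteq> 0\<close> unfolding \<delta>_def by (simp add: field_simps)
  qed
  then have "ereal (1 + \<delta>) \<le> Ind_CP star e C X0"
    unfolding Ind_CP_def by (auto intro: Inf_greatest)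
  moreover have "\<delta> > 0"
    using dist_pos K \<open>h \<noteq> 0\<close> unfolding \<delta>_def by simp
  ultimately show ?thesis
    by (simp add: less_le_trans[of 1 "ereal (1 + \<delta>)"])
qed

end
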